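(* Let $q_0$ be a distribution on $[S]^d$ and consider the masking noising process started from $q_0$. Then $$\mathcal B(q_0)=\int_0^\infty\mathcal I(t)\,dt\qquad\text{and}\qquad\mathcal C(q_0)=\int_0^\infty(e^t-1)\,\mathcal I(t)\,dt.$$ Consequently $\mathcal D(q_0)\le\min\{\mathcal B(q_0),\mathcal C(q_0)\}$.
   Context: For $x\sim q$ on $[S]^d$: total correlation $\mathcal C(q)=\sum_{i=1}^d\mathcal H(x^i)-\mathcal H(x)$; dual total correlation $\mathcal B(q)=\mathcal H(x)-\sum_{i=1}^d\mathcal H(x^i\mid x^{-i})$ ($\mathcal H$ Shannon entropy). Masking noising process: starting from $x_0\sim q_0$, each coordinate independently is replaced by the symbol MASK at an Exp(1) time and stays masked; $x_t$ is the state at time $t$. $\mathcal I(t)=\sum_{i\neq j\in[d]}\mathrm I\big(x_t^i;x_t^j\mid(x_t^k)_{k\notin\{i,j\}}\big)$ (conditional mutual information, MASK treated as a symbol); effective total correlation $\mathcal D(q_0)=\int_0^\infty\min(1,t)\mathcal I(t)\,dt$. *)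

theory Defs
  imports "HOL-Probability.Probability"
begin

definition shannon_entropy :: "'a pmf \<Rightarrow> real" where
  "shannon_entropy \<mu> = - (\<Sum>x\<in>set_pmf \<mu>. pmf \<mu> x * ln (pmf \<mu> x))"

definition ent_coords :: "('i \<Rightarrow> 'b) pmf \<Rightarrow> 'i set \<Rightarrow> real" where
  "ent_coords \<mu> A = shannon_entropy (map_pmf (\<lambda>x. restrict x A) \<mu>)"

definition ent_coord :: "('i \<Rightarrow> 'b) pmf \<Rightarrow> 'i \<Rightarrow> real" where
  "ent_coord \<mu> i = shannon_entropy (map_pmf (\<lambda>x. x i) \<mu>)"

definition cond_ent_coords :: "('i \<Rightarrow> 'b) pmf \<Rightarrow> 'i set \<Rightarrow> 'i set \<Rightarrow> real" where
  "cond_ent_coords \<mu> A B = ent_coords \<mu> (A \<union> B) - ent_coords \<mu> B"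

definition cond_mutual_info :: "('i \<Rightarrow> 'b) pmf \<Rightarrow> 'i \<Rightarrow> 'i \<Rightarrow> 'i set \<Rightarrow> real" where
  "cond_mutual_info \<mu> i j K = cond_ent_coords \<mu> {i} K - cond_ent_coords \<mu> {i} ({j} \<union> K)"

definition total_correlation :: "nat \<Rightarrow> (nat \<Rightarrow> 'b) pmf \<Rightarrow> real" where
  "total_correlation d q = (\<Sum>i<d. ent_coord q i) - ent_coords q {..<d}"

definition dual_total_correlation :: "nat \<Rightarrow> (nat \<Rightarrow> 'b) pmf \<Rightarrow> real" where
  "dual_total_correlation d q =
     ent_coords q {..<d} - (\<Sum>i<d. cond_ent_coords q {i} ({..<d} - {i}))"

text \<open>Masking process: None is the symbol MASK. Each coordinate independently is
  masked by time t with probability 1 - exp(-t), i.e. kept with probability exp(-t).\<close>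
definition masked :: "nat \<Rightarrow> (nat \<Rightarrow> 'b) pmf \<Rightarrow> real \<Rightarrow> (nat \<Rightarrow> 'b option) pmf" where
  "masked d q0 t = bind_pmf q0 (\<lambda>x. Pi_pmf {..<d} None
      (\<lambda>i. map_pmf (\<lambda>keep. if keep then Some (x i) else None) (bernoulli_pmf (exp (- t)))))"

definition cmi_sum :: "nat \<Rightarrow> (nat \<Rightarrow> 'b) pmf \<Rightarrow> real \<Rightarrow> real" where
  "cmi_sum d q0 t = (\<Sum>i<d. \<Sum>j\<in>{..<d} - {i}.
      cond_mutual_info (masked d q0 t) i j ({..<d} - {i, j}))"

definition effective_total_correlation :: "nat \<Rightarrow> (nat \<Rightarrow> 'b) pmf \<Rightarrow> real" where
  "effective_total_correlation d q0 = integral {0..} (\<lambda>t. min 1 t * cmi_sum d q0 t)"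

end

theory Submission
  imports Defs
begin

(* Write p = exp (-t) and h N = H(x_0^N). At time t each coordinate is revealed independently
   with probability p, and the revealed configuration also determines which coordinates are
   masked, so H(x_t^A) = |A| H(Bernoulli p) + F_A(p), where F_A is the multilinear extension of h:
   the mean of h over a random subset of A that contains each element with probability p.
   The Bernoulli terms cancel in every conditional mutual information, leaving
   I(t) = - p^2 F''(p) for F = F_{[d]}, and F'' <= 0 because entropy is submodular.
   The substitution p = exp (-t) turns the two time integrals into integrals of - p F''(p) and
   - (1 - p) F''(p) over [0, 1], which are evaluated by the fundamental theorem of calculus
   through the antiderivatives F - p F' and - (1 - p) F' - F; the values of F and F' at 0 and 1
   are exactly the entropy sums in B and C. Finally min 1 t is at most both 1 and exp t - 1. *)

section \<open>Entropy of finitely supported distributions\<close>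

lemma shannon_entropy_map_inj:
  assumes "inj_on f (set_pmf \<mu>)"
  shows "shannon_entropy (map_pmf f \<mu>) = shannon_entropy \<mu>"
proof -
  have "shannon_entropy (map_pmf f \<mu>) =
      -(\<Sum>x\<in>set_pmf \<mu>. pmf (map_pmf f \<mu>) (f x) * ln (pmf (map_pmf f \<mu>) (f x)))"
    by (simp add: shannon_entropy_def sum.reindex[OF assms])
  also have "\<dots> = shannon_entropy \<mu>"
    using pmf_map_inj[OF assms] by (simp add: shannon_entropy_def)
  finally show ?thesis .
qed

lemma pmf_map_pmf_eq_sum:
  assumes "finite (set_pmf \<mu>)"
  shows "pmf (map_pmf f \<mu>) y = (\<Sum>x\<in>{x\<in>set_pmf \<mu>. f x = y}. pmf \<mu> x)"
proof -
  have "pmf (map_pmf f \<mu>) y = measure \<mu> (f -` {y} \<inter> set_pmf \<mu>)"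
    by (simp add: pmf_map measure_Int_set_pmf)
  also have "f -` {y} \<inter> set_pmf \<mu> = {x\<in>set_pmf \<mu>. f x = y}"
    by auto
  also have "measure \<mu> {x\<in>set_pmf \<mu>. f x = y} = (\<Sum>x\<in>{x\<in>set_pmf \<mu>. f x = y}. pmf \<mu> x)"
    using assms by (intro measure_measure_pmf_finite) auto
  finally show ?thesis .
qed

lemma shannon_entropy_map_pmf:
  assumes fin: "finite (set_pmf \<mu>)"
  shows "shannon_entropy (map_pmf f \<mu>) =
     - (\<Sum>x\<in>set_pmf \<mu>. pmf \<mu> x * ln (pmf (map_pmf f \<mu>) (f x)))"
proof -
  let ?L = "\<lambda>y. ln (pmf (map_pmf f \<mu>) y)"
  have "(\<Sum>x\<in>set_pmf \<mu>. pmf \<mu> x * ?L (f x)) =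
        (\<Sum>y\<in>f ` set_pmf \<mu>. \<Sum>x\<in>{x\<in>set_pmf \<mu>. f x = y}. pmf \<mu> x * ?L (f x))"
    by (rule sum.image_gen[OF fin])
  also have "\<dots> = (\<Sum>y\<in>f ` set_pmf \<mu>. pmf (map_pmf f \<mu>) y * ?L y)"
    by (intro sum.cong refl) (auto simp: sum_distrib_right pmf_map_pmf_eq_sum[OF fin])
  finally show ?thesis by (simp add: shannon_entropy_def)
qed

lemma shannon_entropy_bind_pmf_disjoint:
  assumes fin: "finite (set_pmf \<nu>)"
    and fin': "\<And>a. a \<in> set_pmf \<nu> \<Longrightarrow> finite (set_pmf (\<mu> a))"
    and disj: "\<And>a b. a \<in> set_pmf \<nu> \<Longrightarrow> b \<in> set_pmf \<nu> \<Longrightarrow> a \<noteq> b \<Longrightarrow>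
                 set_pmf (\<mu> a) \<inter> set_pmf (\<mu> b) = {}"
  shows "shannon_entropy (bind_pmf \<nu> \<mu>) =
    shannon_entropy \<nu> + (\<Sum>a\<in>set_pmf \<nu>. pmf \<nu> a * shannon_entropy (\<mu> a))"
proof -
  have pmf_bind_eq: "pmf (bind_pmf \<nu> \<mu>) y = pmf \<nu> a * pmf (\<mu> a) y"
    if a: "a \<in> set_pmf \<nu>" and y: "y \<in> set_pmf (\<mu> a)" for a y
  proof -
    have "pmf (bind_pmf \<nu> \<mu>) y = (\<Sum>b\<in>{a}. pmf (\<mu> b) y * pmf \<nu> b)"
      unfolding pmf_bind
    proof (rule integral_measure_pmf_real)
      fix b assume "b \<in> set_pmf \<nu>" "pmf (\<mu> b) y \<noteq> 0"
      then show "b \<in> {a}" using disj[of a b] a y by (auto simp: set_pmf_eq)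
    qed simp
    then show ?thesis by simp
  qed
  have "shannon_entropy (bind_pmf \<nu> \<mu>) =
     - (\<Sum>a\<in>set_pmf \<nu>. \<Sum>y\<in>set_pmf (\<mu> a). pmf (bind_pmf \<nu> \<mu>) y * ln (pmf (bind_pmf \<nu> \<mu>) y))"
    unfolding shannon_entropy_def set_bind_pmf
    by (subst sum.UNION_disjoint) (use fin fin' disj in \<open>auto simp: disjoint_iff\<close>)
  also have "\<dots> = - (\<Sum>a\<in>set_pmf \<nu>. pmf \<nu> a * ln (pmf \<nu> a) * (\<Sum>y\<in>set_pmf (\<mu> a). pmf (\<mu> a) y)
        + pmf \<nu> a * (\<Sum>y\<in>set_pmf (\<mu> a). pmf (\<mu> a) y * ln (pmf (\<mu> a) y)))"
    by (intro arg_cong[of _ _ uminus] sum.cong refl)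
       (auto simp: pmf_bind_eq ln_mult set_pmf_iff order.strict_iff_order
          sum_distrib_left sum.distrib algebra_simps)
  also have "\<dots> = - (\<Sum>a\<in>set_pmf \<nu>. pmf \<nu> a * ln (pmf \<nu> a)
        + pmf \<nu> a * (\<Sum>y\<in>set_pmf (\<mu> a). pmf (\<mu> a) y * ln (pmf (\<mu> a) y)))"
    by (intro arg_cong[of _ _ uminus] sum.cong refl) (simp add: sum_pmf_eq_1 fin')
  finally show ?thesis
    by (simp add: shannon_entropy_def sum.distrib sum_negf sum_distrib_left)
qed

lemma shannon_entropy_pair_pmf:
  assumes "finite (set_pmf \<mu>)" "finite (set_pmf \<nu>)"
  shows "shannon_entropy (pair_pmf \<mu> \<nu>) = shannon_entropy \<mu> + shannon_entropy \<nu>"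
proof -
  have "pair_pmf \<mu> \<nu> = bind_pmf \<mu> (\<lambda>x. map_pmf (Pair x) \<nu>)"
    by (simp add: pair_pmf_def map_pmf_def)
  then have "shannon_entropy (pair_pmf \<mu> \<nu>) =
      shannon_entropy \<mu> + (\<Sum>a\<in>set_pmf \<mu>. pmf \<mu> a * shannon_entropy (map_pmf (Pair a) \<nu>))"
    using assms by (auto intro: shannon_entropy_bind_pmf_disjoint)
  also have "\<dots> = shannon_entropy \<mu> + (\<Sum>a\<in>set_pmf \<mu>. pmf \<mu> a) * shannon_entropy \<nu>"
    by (simp add: shannon_entropy_map_inj inj_on_def sum_distrib_right)
  finally show ?thesis
    using assms by (simp add: sum_pmf_eq_1)
qed

lemma shannon_entropy_Pi_pmf:
  assumes "finite A" and "\<And>i. i \<in> A \<Longrightarrow> finite (set_pmf (P i))"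
  shows "shannon_entropy (Pi_pmf A dflt P) = (\<Sum>i\<in>A. shannon_entropy (P i))"
  using assms
proof (induction A rule: finite_induct)
  case empty
  then show ?case by (simp add: shannon_entropy_def)
next
  case (insert a A)
  let ?M = "pair_pmf (P a) (Pi_pmf A dflt P)"
  have fin_Pi: "finite (set_pmf (Pi_pmf A dflt P))"
    using insert by (simp add: set_Pi_pmf finite_PiE_dflt)
  have "inj_on (\<lambda>(y, f). f(a := y)) (set_pmf ?M)"
  proof (rule inj_onI, clarify)
    fix y f y' f'
    assume "(y, f) \<in> set_pmf ?M" "(y', f') \<in> set_pmf ?M" and eq: "f(a := y) = f'(a := y')"
    then have "f a = dflt" "f' a = dflt"
      using set_Pi_pmf_subset[OF insert.hyps(1), of dflt P] insert.hyps(2) by auto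
    with eq show "y = y' \<and> f = f'"
      by (metis fun_upd_idem fun_upd_upd fun_upd_same)
  qed
  then show ?case
    using insert fin_Pi
    by (simp add: Pi_pmf_insert shannon_entropy_map_inj shannon_entropy_pair_pmf)
qed

lemma gibbs_inequality:
  assumes fin: "finite (set_pmf \<nu>)"
    and pos: "\<And>w. w \<in> set_pmf \<nu> \<Longrightarrow> Q w > 0"
    and le1: "(\<Sum>w\<in>set_pmf \<nu>. Q w) \<le> 1"
  shows "(\<Sum>w\<in>set_pmf \<nu>. pmf \<nu> w * ln (Q w / pmf \<nu> w)) \<le> 0"
proof -
  have "(\<Sum>w\<in>set_pmf \<nu>. pmf \<nu> w * ln (Q w / pmf \<nu> w)) \<le> (\<Sum>w\<in>set_pmf \<nu>. Q w - pmf \<nu> w)"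
  proof (rule sum_mono)
    fix w assume w: "w \<in> set_pmf \<nu>"
    then have p: "pmf \<nu> w > 0" "Q w > 0" using pos by (auto simp: pmf_positive)
    then have "pmf \<nu> w * ln (Q w / pmf \<nu> w) \<le> pmf \<nu> w * (Q w / pmf \<nu> w - 1)"
      by (intro mult_left_mono ln_le_minus_one) auto
    also have "\<dots> = Q w - pmf \<nu> w" using p by (simp add: field_simps)
    finally show "pmf \<nu> w * ln (Q w / pmf \<nu> w) \<le> Q w - pmf \<nu> w" .
  qed
  also have "\<dots> = (\<Sum>w\<in>set_pmf \<nu>. Q w) - 1"
    using fin by (simp add: sum_subtractf sum_pmf_eq_1)
  finally show ?thesis using le1 by simp
qed

lemma pmf_map_snd_eq_sum:
  assumes fin: "finite (set_pmf \<mu>)"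
  shows "pmf (map_pmf snd \<mu>) c = (\<Sum>a\<in>fst ` set_pmf \<mu>. pmf \<mu> (a, c))"
proof -
  have inj: "inj_on (\<lambda>a. (a, c)) (fst ` set_pmf \<mu>)" by (auto simp: inj_on_def)
  have "(\<Sum>a\<in>fst ` set_pmf \<mu>. pmf \<mu> (a, c)) = (\<Sum>x\<in>(\<lambda>a. (a, c)) ` fst ` set_pmf \<mu>. pmf \<mu> x)"
    by (simp add: sum.reindex[OF inj])
  also have "\<dots> = (\<Sum>x\<in>{x\<in>set_pmf \<mu>. snd x = c}. pmf \<mu> x)"
  proof (rule sum.mono_neutral_right)
    show "finite ((\<lambda>a. (a, c)) ` fst ` set_pmf \<mu>)" using fin by simp
    show "{x \<in> set_pmf \<mu>. snd x = c} \<subseteq> (\<lambda>a. (a, c)) ` fst ` set_pmf \<mu>"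
      by (force simp: image_iff)
    show "\<forall>i\<in>(\<lambda>a. (a, c)) ` fst ` set_pmf \<mu> - {x \<in> set_pmf \<mu>. snd x = c}. pmf \<mu> i = 0"
      by (auto simp: set_pmf_eq)
  qed
  finally show ?thesis by (simp add: pmf_map_pmf_eq_sum[OF fin])
qed

text \<open>The summand is the law under which a and b are conditionally independent given c.\<close>

lemma sum_conditionally_independent_le_one:
  fixes \<nu> :: "('a \<times> 'b \<times> 'c) pmf"
  assumes fin: "finite (set_pmf \<nu>)"
  defines "PA \<equiv> map_pmf (\<lambda>(a, b, c). (a, c)) \<nu>"
    and "PB \<equiv> map_pmf (\<lambda>(a, b, c). (b, c)) \<nu>"
    and "PC \<equiv> map_pmf (\<lambda>(a, b, c). c) \<nu>"
  shows "(\<Sum>(a, b, c)\<in>set_pmf \<nu>. pmf PA (a, c) * pmf PB (b, c) / pmf PC c) \<le> 1"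
proof -
  define SA where "SA = fst ` set_pmf PA"
  define SB where "SB = fst ` set_pmf PB"
  define SC where "SC = set_pmf PC"
  have fin_S: "finite SA" "finite SB" "finite SC"
    using fin by (auto simp: SA_def SB_def SC_def PA_def PB_def PC_def)
  have marg_A: "(\<Sum>a\<in>SA. pmf PA (a, c)) = pmf PC c" for c
  proof -
    have "map_pmf snd PA = PC"
      by (auto simp: PA_def PC_def map_pmf_comp intro!: map_pmf_cong)
    then show ?thesis
      using pmf_map_snd_eq_sum[of PA c] fin by (simp add: SA_def PA_def)
  qed
  have marg_B: "(\<Sum>b\<in>SB. pmf PB (b, c)) = pmf PC c" for c
  proof -
    have "map_pmf snd PB = PC"
      by (auto simp: PB_def PC_def map_pmf_comp intro!: map_pmf_cong)
    then show ?thesis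
      using pmf_map_snd_eq_sum[of PB c] fin by (simp add: SB_def PB_def)
  qed
  have "set_pmf \<nu> \<subseteq> SA \<times> SB \<times> SC"
    by (force simp: SA_def SB_def SC_def PA_def PB_def PC_def)
  then have "(\<Sum>(a, b, c)\<in>set_pmf \<nu>. pmf PA (a, c) * pmf PB (b, c) / pmf PC c)
      \<le> (\<Sum>a\<in>SA. \<Sum>b\<in>SB. \<Sum>c\<in>SC. pmf PA (a, c) * pmf PB (b, c) / pmf PC c)"
    unfolding sum.cartesian_product
    by (intro sum_mono2) (use fin_S in \<open>auto simp: split_beta\<close>)
  also have "\<dots> = (\<Sum>c\<in>SC. (\<Sum>a\<in>SA. pmf PA (a, c)) * (\<Sum>b\<in>SB. pmf PB (b, c)) / pmf PC c)"
    by (subst sum.swap, subst (2) sum.swap)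
       (simp add: sum_product sum_divide_distrib sum.swap[of _ SB SC])
  also have "\<dots> = (\<Sum>c\<in>SC. pmf PC c)"
    by (intro sum.cong refl) (auto simp: marg_A marg_B SC_def pmf_positive)
  also have "\<dots> = 1"
    using fin_S by (simp add: SC_def sum_pmf_eq_1)
  finally show ?thesis .
qed

lemma shannon_entropy_submodular:
  fixes \<nu> :: "('a \<times> 'b \<times> 'c) pmf"
  assumes fin: "finite (set_pmf \<nu>)"
  shows "shannon_entropy \<nu> + shannon_entropy (map_pmf (\<lambda>(a, b, c). c) \<nu>)
       \<le> shannon_entropy (map_pmf (\<lambda>(a, b, c). (a, c)) \<nu>)
          + shannon_entropy (map_pmf (\<lambda>(a, b, c). (b, c)) \<nu>)"
proof -
  define fa :: "'a \<times> 'b \<times> 'c \<Rightarrow> 'a \<times> 'c" where "fa = (\<lambda>(a, b, c). (a, c))"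
  define fb :: "'a \<times> 'b \<times> 'c \<Rightarrow> 'b \<times> 'c" where "fb = (\<lambda>(a, b, c). (b, c))"
  define fc :: "'a \<times> 'b \<times> 'c \<Rightarrow> 'c" where "fc = (\<lambda>(a, b, c). c)"
  define Q where "Q = (\<lambda>w. pmf (map_pmf fa \<nu>) (fa w) * pmf (map_pmf fb \<nu>) (fb w)
                            / pmf (map_pmf fc \<nu>) (fc w))"
  have pos: "pmf \<nu> w > 0" "pmf (map_pmf fa \<nu>) (fa w) > 0" "pmf (map_pmf fb \<nu>) (fb w) > 0"
      "pmf (map_pmf fc \<nu>) (fc w) > 0" if "w \<in> set_pmf \<nu>" for w
    using that by (auto simp: pmf_positive)
  have "(\<Sum>w\<in>set_pmf \<nu>. Q w) \<le> 1"
    using sum_conditionally_independent_le_one[OF fin]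
    by (simp add: Q_def fa_def fb_def fc_def split_beta)
  then have "(\<Sum>w\<in>set_pmf \<nu>. pmf \<nu> w * ln (Q w / pmf \<nu> w)) \<le> 0"
    using fin pos by (intro gibbs_inequality) (auto simp: Q_def)
  moreover have "pmf \<nu> w * ln (Q w / pmf \<nu> w) =
      pmf \<nu> w * ln (pmf (map_pmf fa \<nu>) (fa w)) + pmf \<nu> w * ln (pmf (map_pmf fb \<nu>) (fb w))
      - pmf \<nu> w * ln (pmf (map_pmf fc \<nu>) (fc w)) - pmf \<nu> w * ln (pmf \<nu> w)"
    if "w \<in> set_pmf \<nu>" for w
    using pos[OF that] by (simp add: Q_def ln_mult ln_div algebra_simps)
  ultimately have "(\<Sum>w\<in>set_pmf \<nu>. pmf \<nu> w * ln (pmf (map_pmf fa \<nu>) (fa w)))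
      + (\<Sum>w\<in>set_pmf \<nu>. pmf \<nu> w * ln (pmf (map_pmf fb \<nu>) (fb w)))
      - (\<Sum>w\<in>set_pmf \<nu>. pmf \<nu> w * ln (pmf (map_pmf fc \<nu>) (fc w)))
      - (\<Sum>w\<in>set_pmf \<nu>. pmf \<nu> w * ln (pmf \<nu> w)) \<le> 0"
    by (simp add: sum.distrib sum_subtractf cong: sum.cong)
  then show ?thesis
    unfolding fa_def[symmetric] fb_def[symmetric] fc_def[symmetric]
      shannon_entropy_map_pmf[OF fin] shannon_entropy_def[of \<nu>]
    by linarith
qed

lemma shannon_entropy_map_determined_by_restrict:
  assumes "\<And>x y. F x = F y \<longleftrightarrow> restrict x B = restrict y B"
  shows "shannon_entropy (map_pmf F q) = ent_coords q B"
proof -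
  have F_restrict: "F (restrict x B) = F x" for x
    using assms by simp
  have "map_pmf F q = map_pmf F (map_pmf (\<lambda>x. restrict x B) q)"
    by (simp add: map_pmf_comp F_restrict)
  moreover have "inj_on F (set_pmf (map_pmf (\<lambda>x. restrict x B) q))"
    using assms by (auto simp: inj_on_def)
  ultimately show ?thesis
    by (simp add: ent_coords_def shannon_entropy_map_inj)
qed

lemma ent_coord_eq_ent_coords: "ent_coord q i = ent_coords q {i}"
  unfolding ent_coord_def
  by (rule shannon_entropy_map_determined_by_restrict) (auto simp: fun_eq_iff restrict_def)

lemma ent_coords_empty [simp]: "ent_coords q {} = 0"
proof -
  have "map_pmf (\<lambda>x. restrict x {}) q = return_pmf (\<lambda>_. undefined)"
    by (simp add: restrict_def map_pmf_const)
  then show ?thesis by (simp add: ent_coords_def shannon_entropy_def)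
qed

lemma ent_coords_submodular:
  assumes "finite (set_pmf q)"
  shows "ent_coords q N + ent_coords q (insert i (insert j N))
       \<le> ent_coords q (insert i N) + ent_coords q (insert j N)"
proof -
  define \<nu> where "\<nu> = map_pmf (\<lambda>x. (x i, x j, restrict x N)) q"
  have "shannon_entropy \<nu> = ent_coords q (insert i (insert j N))"
    unfolding \<nu>_def
    by (rule shannon_entropy_map_determined_by_restrict) (auto simp: fun_eq_iff restrict_def)
  moreover have "shannon_entropy (map_pmf (\<lambda>(a, b, c). (a, c)) \<nu>) = ent_coords q (insert i N)"
    unfolding \<nu>_def map_pmf_comp
    by (rule shannon_entropy_map_determined_by_restrict) (auto simp: fun_eq_iff restrict_def)
  moreover have "shannon_entropy (map_pmf (\<lambda>(a, b, c). (b, c)) \<nu>) = ent_coords q (insert j N)"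
    unfolding \<nu>_def map_pmf_comp
    by (rule shannon_entropy_map_determined_by_restrict) (auto simp: fun_eq_iff restrict_def)
  moreover have "shannon_entropy (map_pmf (\<lambda>(a, b, c). c) \<nu>) = ent_coords q N"
    by (simp add: \<nu>_def map_pmf_comp ent_coords_def)
  ultimately show ?thesis
    using shannon_entropy_submodular[of \<nu>] assms by (simp add: \<nu>_def)
qed

section \<open>The multilinear extension of a set function\<close>

definition multilinear_ext :: "'i set \<Rightarrow> ('i set \<Rightarrow> real) \<Rightarrow> real \<Rightarrow> real" where
  "multilinear_ext A g p = (\<Sum>N\<in>Pow A. p ^ card N * (1 - p) ^ (card A - card N) * g N)"

lemma multilinear_ext_empty [simp]: "multilinear_ext {} g p = g {}"
  by (simp add: multilinear_ext_def)

lemma multilinear_ext_insert: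
  assumes fin: "finite A" and a: "a \<notin> A"
  shows "multilinear_ext (insert a A) g p =
    p * multilinear_ext A (\<lambda>N. g (insert a N)) p + (1 - p) * multilinear_ext A g p"
proof -
  let ?w = "\<lambda>N. p ^ card N * (1 - p) ^ (Suc (card A) - card N) * g N"
  have inj: "inj_on (insert a) (Pow A)" using a by (auto simp: inj_on_def)
  have "multilinear_ext (insert a A) g p = (\<Sum>N\<in>Pow A. ?w N) + (\<Sum>N\<in>insert a ` Pow A. ?w N)"
    unfolding multilinear_ext_def Pow_insert using fin a
    by (subst sum.union_disjoint) auto
  also have "(\<Sum>N\<in>insert a ` Pow A. ?w N)
     = (\<Sum>N\<in>Pow A. p * (p ^ card N * (1 - p) ^ (card A - card N) * g (insert a N)))"
    unfolding sum.reindex[OF inj]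
  proof (intro sum.cong refl)
    fix N assume "N \<in> Pow A"
    then have "finite N" "a \<notin> N" using fin a finite_subset by auto
    then show "(?w \<circ> insert a) N = p * (p ^ card N * (1 - p) ^ (card A - card N) * g (insert a N))"
      by simp
  qed
  also have "(\<Sum>N\<in>Pow A. ?w N)
     = (\<Sum>N\<in>Pow A. (1 - p) * (p ^ card N * (1 - p) ^ (card A - card N) * g N))"
  proof (intro sum.cong refl)
    fix N assume "N \<in> Pow A"
    then have "Suc (card A) - card N = Suc (card A - card N)"
      using fin by (auto intro: card_mono Suc_diff_le)
    then show "?w N = (1 - p) * (p ^ card N * (1 - p) ^ (card A - card N) * g N)" by simp
  qed
  finally show ?thesis by (simp add: multilinear_ext_def sum_distrib_left)
qed

lemma multilinear_ext_diff:
  "multilinear_ext A (\<lambda>N. f N - g N) p = multilinear_ext A f p - multilinear_ext A g p"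
  by (simp add: multilinear_ext_def sum_subtractf algebra_simps)

lemma multilinear_ext_nonpos:
  assumes "0 \<le> p" "p \<le> 1" "\<And>N. N \<subseteq> A \<Longrightarrow> g N \<le> 0"
  shows "multilinear_ext A g p \<le> 0"
  unfolding multilinear_ext_def using assms
  by (intro sum_nonpos mult_nonneg_nonpos) auto

lemma multilinear_ext_at_1: "finite A \<Longrightarrow> multilinear_ext A g 1 = g A"
  by (induction A arbitrary: g rule: finite_induct) (simp_all add: multilinear_ext_insert)

lemma multilinear_ext_at_0: "finite A \<Longrightarrow> multilinear_ext A g 0 = g {}"
  by (induction A arbitrary: g rule: finite_induct) (simp_all add: multilinear_ext_insert)

definition multilinear_ext_deriv :: "'i set \<Rightarrow> ('i set \<Rightarrow> real) \<Rightarrow> real \<Rightarrow> real" where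
  "multilinear_ext_deriv A g p =
     (\<Sum>a\<in>A. multilinear_ext (A - {a}) (\<lambda>N. g (insert a N) - g N) p)"

definition second_diff :: "('i set \<Rightarrow> real) \<Rightarrow> 'i \<Rightarrow> 'i \<Rightarrow> 'i set \<Rightarrow> real" where
  "second_diff g a b N = g (insert a (insert b N)) - g (insert a N) - g (insert b N) + g N"

definition multilinear_ext_deriv2 :: "'i set \<Rightarrow> ('i set \<Rightarrow> real) \<Rightarrow> real \<Rightarrow> real" where
  "multilinear_ext_deriv2 A g p =
     (\<Sum>a\<in>A. \<Sum>b\<in>A - {a}. multilinear_ext (A - {a} - {b}) (second_diff g a b) p)"

lemma multilinear_ext_second_diff:
  "multilinear_ext A (second_diff g a b) p =
     multilinear_ext A (\<lambda>N. g (insert a (insert b N))) p - multilinear_ext A (\<lambda>N. g (insert a N)) p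
     - multilinear_ext A (\<lambda>N. g (insert b N)) p + multilinear_ext A g p"
  by (simp add: multilinear_ext_def second_diff_def sum.distrib sum_subtractf algebra_simps)

lemma multilinear_ext_deriv_insert:
  assumes "finite A" and "a \<notin> A"
  shows "multilinear_ext_deriv (insert a A) g p =
    p * multilinear_ext_deriv A (\<lambda>N. g (insert a N)) p + multilinear_ext A (\<lambda>N. g (insert a N)) p
    + (1 - p) * multilinear_ext_deriv A g p - multilinear_ext A g p"
proof -
  let ?gain = "\<lambda>g b N. g (insert b N) - g N"
  have "multilinear_ext (insert a A - {b}) (?gain g b) p
      = p * multilinear_ext (A - {b}) (?gain (\<lambda>N. g (insert a N)) b) p
        + (1 - p) * multilinear_ext (A - {b}) (?gain g b) p" if "b \<in> A" for b
  proof -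
    have "insert a A - {b} = insert a (A - {b})"
      using assms that by auto
    then show ?thesis
      using assms by (simp add: multilinear_ext_insert insert_commute)
  qed
  then have "(\<Sum>b\<in>A. multilinear_ext (insert a A - {b}) (?gain g b) p)
      = p * multilinear_ext_deriv A (\<lambda>N. g (insert a N)) p + (1 - p) * multilinear_ext_deriv A g p"
    by (simp add: multilinear_ext_deriv_def sum_distrib_left sum.distrib cong: sum.cong)
  moreover have "insert a A - {a} = A"
    using assms by auto
  ultimately show ?thesis
    using assms by (simp add: multilinear_ext_deriv_def multilinear_ext_diff)
qed

lemma multilinear_ext_has_derivative:
  assumes "finite A"
  shows "(multilinear_ext A g has_real_derivative multilinear_ext_deriv A g p) (at p)"
  using assms
proof (induction A arbitrary: g rule: finite_induct)
  case empty
  then show ?case by (simp add: multilinear_ext_deriv_def)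
next
  case (insert a A)
  let ?ga = "\<lambda>N. g (insert a N)"
  have "multilinear_ext (insert a A) g =
      (\<lambda>p. p * multilinear_ext A ?ga p + (1 - p) * multilinear_ext A g p)"
    using insert.hyps by (simp add: multilinear_ext_insert fun_eq_iff)
  moreover have "((\<lambda>p. p * multilinear_ext A ?ga p + (1 - p) * multilinear_ext A g p)
      has_real_derivative
        (p * multilinear_ext_deriv A ?ga p + multilinear_ext A ?ga p
         + (1 - p) * multilinear_ext_deriv A g p - multilinear_ext A g p)) (at p)"
    by (rule DERIV_cong[OF DERIV_add[OF DERIV_mult'[OF DERIV_ident insert.IH]
          DERIV_mult'[OF DERIV_diff[OF DERIV_const DERIV_ident] insert.IH]]]) simp
  ultimately show ?case
    by (simp add: multilinear_ext_deriv_insert[OF insert.hyps])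
qed

lemma multilinear_ext_deriv_has_derivative:
  assumes "finite A"
  shows "(multilinear_ext_deriv A g has_real_derivative multilinear_ext_deriv2 A g p) (at p)"
  unfolding multilinear_ext_deriv_def multilinear_ext_deriv2_def
proof (rule DERIV_sum)
  fix a assume "a \<in> A"
  have "second_diff g a b = (\<lambda>N. (g (insert a (insert b N)) - g (insert b N))
                                 - (g (insert a N) - g N))" for b
    by (simp add: second_diff_def fun_eq_iff)
  then show "((\<lambda>p. multilinear_ext (A - {a}) (\<lambda>N. g (insert a N) - g N) p) has_real_derivative
      (\<Sum>b\<in>A - {a}. multilinear_ext (A - {a} - {b}) (second_diff g a b) p)) (at p)"
    using multilinear_ext_has_derivative[of "A - {a}" "\<lambda>N. g (insert a N) - g N" p] assms
    by (simp add: multilinear_ext_deriv_def)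
qed

lemma multilinear_ext_deriv_at_1:
  "finite A \<Longrightarrow> multilinear_ext_deriv A g 1 = (\<Sum>a\<in>A. g A - g (A - {a}))"
  by (auto simp: multilinear_ext_deriv_def multilinear_ext_at_1 insert_absorb intro!: sum.cong)

lemma multilinear_ext_deriv_at_0:
  "finite A \<Longrightarrow> multilinear_ext_deriv A g 0 = (\<Sum>a\<in>A. g {a} - g {})"
  by (simp add: multilinear_ext_deriv_def multilinear_ext_at_0)

lemma multilinear_ext_deriv2_nonpos:
  assumes submodular: "\<And>a b N. g N + g (insert a (insert b N)) \<le> g (insert a N) + g (insert b N)"
    and p: "0 \<le> p" "p \<le> 1"
  shows "multilinear_ext_deriv2 A g p \<le> 0"
proof -
  have "second_diff g a b N \<le> 0" for a b N
    using submodular[of N a b] by (simp add: second_diff_def)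
  then show ?thesis
    unfolding multilinear_ext_deriv2_def using p by (intro sum_nonpos multilinear_ext_nonpos)
qed

section \<open>Entropies under the masking process\<close>

definition reveal :: "('i \<Rightarrow> 'b) \<Rightarrow> ('i \<Rightarrow> bool) \<Rightarrow> 'i \<Rightarrow> 'b option" where
  "reveal x b i = (if b i then Some (x i) else None)"

abbreviation keep_pattern :: "'i set \<Rightarrow> real \<Rightarrow> ('i \<Rightarrow> bool) pmf" where
  "keep_pattern A p \<equiv> Pi_pmf A False (\<lambda>_. bernoulli_pmf p)"

lemma masked_eq_bind_reveal:
  "masked d q0 t = bind_pmf q0 (\<lambda>x. map_pmf (\<lambda>b i. if i < d then reveal x b i else None)
      (keep_pattern {..<d} (exp (- t))))"
  unfolding masked_def
proof (intro bind_pmf_cong refl)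
  fix x :: "nat \<Rightarrow> 'b"
  let ?P = "bernoulli_pmf (exp (- t))"
  have "Pi_pmf {..<d} None (\<lambda>i. map_pmf (\<lambda>keep. if keep then Some (x i) else None) ?P)
      = Pi_pmf {..<d} None (\<lambda>i. bind_pmf ?P (\<lambda>keep. return_pmf (if keep then Some (x i) else None)))"
    by (simp add: map_pmf_def)
  also have "\<dots> = bind_pmf (keep_pattern {..<d} (exp (- t)))
       (\<lambda>b. Pi_pmf {..<d} None (\<lambda>i. return_pmf (if b i then Some (x i) else None)))"
    by (rule Pi_pmf_bind[where d' = False]) simp
  also have "\<dots> = map_pmf (\<lambda>b i. if i < d then reveal x b i else None) (keep_pattern {..<d} (exp (- t)))"
    unfolding reveal_def by (simp add: map_pmf_def)
  finally show "Pi_pmf {..<d} None (\<lambda>i. map_pmf (\<lambda>keep. if keep then Some (x i) else None) ?P)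
      = map_pmf (\<lambda>b i. if i < d then reveal x b i else None) (keep_pattern {..<d} (exp (- t)))" .
qed

lemma map_restrict_masked:
  assumes A: "A \<subseteq> {..<d}"
  shows "map_pmf (\<lambda>x. restrict x A) (masked d q0 t) =
     bind_pmf (keep_pattern A (exp (- t))) (\<lambda>b. map_pmf (\<lambda>x. restrict (reveal x b) A) q0)"
proof -
  let ?cut = "\<lambda>b i. if i \<in> A then b i else False"
  have pattern_A: "keep_pattern A (exp (- t)) = map_pmf ?cut (keep_pattern {..<d} (exp (- t)))"
    by (rule Pi_pmf_subset[OF _ A]) simp
  have "map_pmf (\<lambda>x. restrict x A) (masked d q0 t) =
     bind_pmf q0 (\<lambda>x. map_pmf (\<lambda>b. restrict (reveal x b) A) (keep_pattern A (exp (- t))))"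
    unfolding masked_eq_bind_reveal pattern_A map_bind_pmf map_pmf_comp using A
    by (intro bind_pmf_cong refl map_pmf_cong) (auto simp: restrict_def reveal_def fun_eq_iff)
  also have "\<dots> = bind_pmf (keep_pattern A (exp (- t))) (\<lambda>b. map_pmf (\<lambda>x. restrict (reveal x b) A) q0)"
    unfolding map_pmf_def by (rule bind_commute_pmf)
  finally show ?thesis .
qed

lemma sum_keep_pattern_eq_multilinear_ext:
  assumes fin: "finite A" and p: "0 \<le> p" "p \<le> 1"
  shows "(\<Sum>b\<in>set_pmf (keep_pattern A p). pmf (keep_pattern A p) b * g {i. b i})
       = multilinear_ext A g p"
proof -
  let ?B = "keep_pattern A p"
  let ?ind = "\<lambda>N i. i \<in> N"
  have inj: "inj_on ?ind (Pow A)"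
    by (auto simp: inj_on_def fun_eq_iff)
  have "set_pmf ?B \<subseteq> ?ind ` Pow A"
  proof
    fix b assume "b \<in> set_pmf ?B"
    then have "{i. b i} \<in> Pow A"
      using set_Pi_pmf_subset[OF fin, of False "\<lambda>_. bernoulli_pmf p"] by auto
    then show "b \<in> ?ind ` Pow A"
      by (intro image_eqI[of _ _ "{i. b i}"]) auto
  qed
  then have "(\<Sum>b\<in>set_pmf ?B. pmf ?B b * g {i. b i}) = (\<Sum>b\<in>?ind ` Pow A. pmf ?B b * g {i. b i})"
    using fin by (intro sum.mono_neutral_left) (auto simp: set_pmf_eq)
  also have "\<dots> = (\<Sum>N\<in>Pow A. pmf ?B (?ind N) * g N)"
    by (simp add: sum.reindex[OF inj])
  also have "\<dots> = multilinear_ext A g p"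
    unfolding multilinear_ext_def
  proof (intro sum.cong refl)
    fix N assume N: "N \<in> Pow A"
    then have fin_N: "finite N" using fin finite_subset by blast
    have "pmf ?B (?ind N) = (\<Prod>i\<in>A. if i \<in> N then p else 1 - p)"
      using N p by (subst pmf_Pi'[OF fin]) (auto intro!: prod.cong)
    also have "\<dots> = p ^ card N * (1 - p) ^ (card A - card N)"
      using N fin fin_N
      by (simp add: prod.If_cases Int_absorb1 Diff_eq[symmetric] card_Diff_subset)
    finally show "pmf ?B (?ind N) * g N = p ^ card N * (1 - p) ^ (card A - card N) * g N"
      by simp
  qed
  finally show ?thesis .
qed

lemma ent_coords_masked:
  assumes A: "A \<subseteq> {..<d}" and fin: "finite (set_pmf q0)" and t: "t \<ge> 0"
  shows "ent_coords (masked d q0 t) A =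
    card A * shannon_entropy (bernoulli_pmf (exp (- t))) + multilinear_ext A (ent_coords q0) (exp (- t))"
proof -
  define p where "p = exp (- t)"
  have p: "0 \<le> p" "p \<le> 1" using t by (auto simp: p_def)
  define \<mu> where "\<mu> = (\<lambda>b. map_pmf (\<lambda>x. restrict (reveal x b) A) q0)"
  have fin_A: "finite A" using A finite_subset by blast
  have fin_B: "finite (set_pmf (keep_pattern A p))"
    using fin_A by (simp add: set_Pi_pmf finite_PiE_dflt)
  have outside: "\<not> b i" if "b \<in> set_pmf (keep_pattern A p)" "i \<notin> A" for b i
    using set_Pi_pmf_subset[OF fin_A, of False "\<lambda>_. bernoulli_pmf p"] that by auto
  have ent_\<mu>: "shannon_entropy (\<mu> b) = ent_coords q0 {i. b i}"
    if "b \<in> set_pmf (keep_pattern A p)" for b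
    unfolding \<mu>_def using outside[OF that]
    by (intro shannon_entropy_map_determined_by_restrict)
       (auto simp: fun_eq_iff restrict_def reveal_def split: if_splits)
  have "ent_coords (masked d q0 t) A =
      shannon_entropy (keep_pattern A p)
      + (\<Sum>b\<in>set_pmf (keep_pattern A p). pmf (keep_pattern A p) b * shannon_entropy (\<mu> b))"
    unfolding ent_coords_def map_restrict_masked[OF A] p_def[symmetric] \<mu>_def[symmetric]
  proof (rule shannon_entropy_bind_pmf_disjoint[OF fin_B])
    show "finite (set_pmf (\<mu> b))" for b using fin by (simp add: \<mu>_def)
    fix a b assume ab: "a \<in> set_pmf (keep_pattern A p)" "b \<in> set_pmf (keep_pattern A p)" "a \<noteq> b"
    then obtain i where "a i \<noteq> b i" by auto
    with outside[OF ab(1)] outside[OF ab(2)] have "i \<in> A" "a i \<noteq> b i" by auto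
    then show "set_pmf (\<mu> a) \<inter> set_pmf (\<mu> b) = {}"
      by (auto simp: \<mu>_def fun_eq_iff restrict_def reveal_def split: if_splits)
  qed
  also have "\<dots> = card A * shannon_entropy (bernoulli_pmf p) + multilinear_ext A (ent_coords q0) p"
    using fin_A p
    by (simp add: shannon_entropy_Pi_pmf ent_\<mu> sum_keep_pattern_eq_multilinear_ext cong: sum.cong)
  finally show ?thesis by (simp add: p_def)
qed

lemma cond_mutual_info_masked:
  assumes ij: "i < d" "j < d" "i \<noteq> j" and fin: "finite (set_pmf q0)" and t: "t \<ge> 0"
  shows "cond_mutual_info (masked d q0 t) i j ({..<d} - {i, j}) =
    - (exp (- t) ^ 2) * multilinear_ext ({..<d} - {i, j}) (second_diff (ent_coords q0) i j) (exp (- t))"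
proof -
  define K where "K = {..<d} - {i, j}"
  define p where "p = exp (- t)"
  define h where "h = ent_coords q0"
  define w where "w = shannon_entropy (bernoulli_pmf p)"
  have K: "finite K" "i \<notin> K" "j \<notin> K"
    by (auto simp: K_def)
  have ent: "ent_coords (masked d q0 t) X = card X * w + multilinear_ext X h p"
    if "X \<subseteq> {..<d}" for X
    using ent_coords_masked[OF that fin t] by (simp add: w_def h_def p_def)
  have sets: "{i} \<union> K = insert i K" "{j} \<union> K = insert j K" "{i} \<union> insert j K = insert i (insert j K)"
    "insert i K \<subseteq> {..<d}" "insert j K \<subseteq> {..<d}" "insert i (insert j K) \<subseteq> {..<d}" "K \<subseteq> {..<d}"
    using ij by (auto simp: K_def)
  show ?thesis
    unfolding K_def[symmetric] p_def[symmetric] h_def[symmetric]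
    unfolding cond_mutual_info_def cond_ent_coords_def sets(1-3) ent[OF sets(4)]
      ent[OF sets(5)] ent[OF sets(6)] ent[OF sets(7)]
    using K ij
    by (simp add: multilinear_ext_insert multilinear_ext_second_diff insert_commute power2_eq_square algebra_simps)
qed

lemma cmi_sum_eq_multilinear_ext_deriv2:
  assumes fin: "finite (set_pmf q0)" and t: "t \<ge> 0"
  shows "cmi_sum d q0 t = - (exp (- t) ^ 2) * multilinear_ext_deriv2 {..<d} (ent_coords q0) (exp (- t))"
  unfolding cmi_sum_def multilinear_ext_deriv2_def sum_distrib_left
proof (intro sum.cong refl)
  fix i j assume "i \<in> {..<d}" "j \<in> {..<d} - {i}"
  moreover have "{..<d} - {i, j} = {..<d} - {i} - {j}"
    by auto
  ultimately show "cond_mutual_info (masked d q0 t) i j ({..<d} - {i, j}) = - (exp (- t) ^ 2)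
      * multilinear_ext ({..<d} - {i} - {j}) (second_diff (ent_coords q0) i j) (exp (- t))"
    using cond_mutual_info_masked[OF _ _ _ fin t, of i d j] by simp
qed

lemma cmi_sum_nonneg:
  assumes fin: "finite (set_pmf q0)" and t: "t \<ge> 0"
  shows "cmi_sum d q0 t \<ge> 0"
proof -
  have "multilinear_ext_deriv2 {..<d} (ent_coords q0) (exp (- t)) \<le> 0"
    using t by (intro multilinear_ext_deriv2_nonpos ent_coords_submodular[OF fin]) auto
  then show ?thesis
    by (simp add: cmi_sum_eq_multilinear_ext_deriv2[OF fin t] mult_nonneg_nonpos)
qed

section \<open>Integration over the time of the process\<close>

lemma has_integral_exp_substitution:
  fixes f g G :: "real \<Rightarrow> real"
  assumes G: "\<And>p. (G has_real_derivative g p) (at p)"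
    and f: "\<And>t. t \<ge> 0 \<Longrightarrow> f t = exp (- t) * g (exp (- t))"
    and nonneg: "\<And>t. t \<ge> 0 \<Longrightarrow> f t \<ge> 0"
  shows "(f has_integral G 1 - G 0) {0..}"
proof (rule has_integral_to_inf)
  have "((\<lambda>t. - G (exp (- t))) has_real_derivative exp (- t) * g (exp (- t))) (at t)" for t
    by (rule DERIV_cong[OF DERIV_minus[OF DERIV_chain2[OF G]]]) (auto intro!: derivative_eq_intros)
  then have "(f has_integral G 1 - G (exp (- y))) {0..y}" if "y \<ge> 0" for y
    using that fundamental_theorem_of_calculus[of 0 y "\<lambda>t. - G (exp (- t))" f] f
    by (auto simp flip: has_real_derivative_iff_has_vector_derivative intro: has_field_derivative_at_within)
  then have "\<forall>\<^sub>F y in at_top. integral {0..y} f = G 1 - G (exp (- y))"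
    by (intro eventually_at_top_linorderI[of 0] integral_unique) auto
  moreover have "((\<lambda>y. G 1 - G (exp (- y))) \<longlongrightarrow> G 1 - G 0) at_top"
    using DERIV_isCont[OF G]
    by (intro tendsto_intros isCont_tendsto_compose[of 0 G]
        filterlim_compose[OF exp_at_bot filterlim_uminus_at_bot_at_top]) auto
  ultimately show "((\<lambda>y. integral {0..y} f) \<longlongrightarrow> G 1 - G 0) at_top"
    by (simp add: filterlim_cong)
  show "f integrable_on {0..y}" for y
    using \<open>\<And>y. y \<ge> 0 \<Longrightarrow> (f has_integral _) {0..y}\<close> by (cases "y \<ge> 0") auto
qed (use nonneg in auto)

lemma cmi_sum_has_integral_dual_total_correlation:
  assumes fin: "finite (set_pmf q0)"
  shows "(cmi_sum d q0 has_integral dual_total_correlation d q0) {0..}"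
proof -
  let ?h = "ent_coords q0"
  define G where "G p = multilinear_ext {..<d} ?h p - p * multilinear_ext_deriv {..<d} ?h p" for p
  have "(G has_real_derivative - p * multilinear_ext_deriv2 {..<d} ?h p) (at p)" for p
    unfolding G_def
    by (rule DERIV_cong[OF DERIV_diff[OF multilinear_ext_has_derivative
          DERIV_mult'[OF DERIV_ident multilinear_ext_deriv_has_derivative]]]) auto
  moreover have "cmi_sum d q0 t = exp (- t) * (- exp (- t) * multilinear_ext_deriv2 {..<d} ?h (exp (- t)))"
    if "t \<ge> 0" for t
    by (simp add: cmi_sum_eq_multilinear_ext_deriv2[OF fin that] power2_eq_square)
  ultimately have "(cmi_sum d q0 has_integral G 1 - G 0) {0..}"
    using cmi_sum_nonneg[OF fin] by (rule has_integral_exp_substitution)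
  moreover have "G 1 - G 0 = dual_total_correlation d q0"
  proof -
    have "{i} \<union> ({..<d} - {i}) = {..<d}" if "i < d" for i
      using that by auto
    then show ?thesis
      by (simp add: G_def multilinear_ext_at_1 multilinear_ext_at_0 multilinear_ext_deriv_at_1
          dual_total_correlation_def cond_ent_coords_def)
  qed
  ultimately show ?thesis by simp
qed

lemma cmi_sum_weighted_has_integral_total_correlation:
  assumes fin: "finite (set_pmf q0)"
  shows "((\<lambda>t. (exp t - 1) * cmi_sum d q0 t) has_integral total_correlation d q0) {0..}"
proof -
  let ?h = "ent_coords q0"
  define G where "G p = - (1 - p) * multilinear_ext_deriv {..<d} ?h p - multilinear_ext {..<d} ?h p" for p
  have "(G has_real_derivative - (1 - p) * multilinear_ext_deriv2 {..<d} ?h p) (at p)" for p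
    unfolding G_def
    by (rule DERIV_cong[OF DERIV_diff[OF DERIV_mult'[OF DERIV_minus[OF DERIV_diff[OF DERIV_const DERIV_ident]]
          multilinear_ext_deriv_has_derivative] multilinear_ext_has_derivative]]) auto
  moreover have "(exp t - 1) * cmi_sum d q0 t =
      exp (- t) * (- (1 - exp (- t)) * multilinear_ext_deriv2 {..<d} ?h (exp (- t)))" if "t \<ge> 0" for t
    using exp_minus_inverse[of t]
    by (simp add: cmi_sum_eq_multilinear_ext_deriv2[OF fin that] power2_eq_square algebra_simps)
  moreover have "(exp t - 1) * cmi_sum d q0 t \<ge> 0" if "t \<ge> 0" for t
    using cmi_sum_nonneg[OF fin that] that by simp
  ultimately have "((\<lambda>t. (exp t - 1) * cmi_sum d q0 t) has_integral G 1 - G 0) {0..}"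
    by (rule has_integral_exp_substitution)
  moreover have "G 1 - G 0 = total_correlation d q0"
    by (simp add: G_def multilinear_ext_at_1 multilinear_ext_at_0 multilinear_ext_deriv_at_0
        total_correlation_def ent_coord_eq_ent_coords sum_subtractf)
  ultimately show ?thesis by simp
qed

lemma integral_min_one_weight_le:
  fixes f :: "real \<Rightarrow> real"
  assumes nonneg: "\<And>t. t \<ge> 0 \<Longrightarrow> f t \<ge> 0"
    and B: "(f has_integral B) {0..}"
    and C: "((\<lambda>t. (exp t - 1) * f t) has_integral C) {0..}"
  shows "integral {0..} (\<lambda>t. min 1 t * f t) \<le> min B C"
proof -
  have lebesgue: "{0::real..} \<in> sets lebesgue"
    by simp
  have "(\<lambda>t. min 1 t * f t) absolutely_integrable_on {0..}"
  proof (rule absolutely_integrable_bounded_measurable_product_real[OF _ lebesgue])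
    show "(\<lambda>t::real. min 1 t) \<in> borel_measurable (lebesgue_on {0..})"
      by (intro continuous_imp_measurable_on_sets_lebesgue continuous_intros lebesgue)
    show "bounded ((\<lambda>t::real. min 1 t) ` {0..})"
      by (rule boundedI[of _ 1]) auto
    show "f absolutely_integrable_on {0..}"
      using B nonneg by (intro nonnegative_absolutely_integrable_1) auto
  qed
  then have int: "(\<lambda>t. min 1 t * f t) integrable_on {0..}"
    by (simp add: absolutely_integrable_on_def)
  have "integral {0..} (\<lambda>t. min 1 t * f t) \<le> B"
    using integral_le[OF int has_integral_integrable[OF B]] integral_unique[OF B] nonneg
    by (simp add: mult_left_le_one_le)
  moreover have "integral {0..} (\<lambda>t. min 1 t * f t) \<le> C"
  proof -
    have "min 1 t * f t \<le> (exp t - 1) * f t" if "t \<ge> 0" for t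
    proof (rule mult_right_mono)
      show "min 1 t \<le> exp t - 1"
        using exp_ge_add_one_self[of t] by linarith
    qed (rule nonneg[OF that])
    then show ?thesis
      using integral_le[OF int has_integral_integrable[OF C]] integral_unique[OF C] by auto
  qed
  ultimately show ?thesis by simp
qed

theorem mainTheorem13:
  fixes S d :: nat and q0 :: "(nat \<Rightarrow> nat) pmf"
  assumes "set_pmf q0 \<subseteq> PiE {..<d} (\<lambda>_. {..<S})"
  shows "(cmi_sum d q0 has_integral dual_total_correlation d q0) {0..} \<and>
         ((\<lambda>t. (exp t - 1) * cmi_sum d q0 t) has_integral total_correlation d q0) {0..} \<and>
         effective_total_correlation d q0
           \<le> min (dual_total_correlation d q0) (total_correlation d q0)"
proof -
  have fin: "finite (set_pmf q0)"
    using assms by (rule finite_subset) (simp add: finite_PiE)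
  note B = cmi_sum_has_integral_dual_total_correlation[OF fin, of d]
  note C = cmi_sum_weighted_has_integral_total_correlation[OF fin, of d]
  have "effective_total_correlation d q0 \<le> min (dual_total_correlation d q0) (total_correlation d q0)"
    unfolding effective_total_correlation_def
    using cmi_sum_nonneg[OF fin] B C by (rule integral_min_one_weight_le)
  with B C show ?thesis by blast
qed

end
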